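(* Let $\ell\ge 2$, $A\ge 2$, $H\ge \ell+1$ be integers and let $\pi$ be an $\ell$-step model predictive control (MPC) agent whose values $\{V_h(s)\}$ are computed by a procedure satisfying the following assumption: for every $h\in[H]$ there is a function $f_h:\mathcal{D}\to\mathbb{R}_+$, where $\mathcal{D}$ is the set of Borel distributions on $[0,1]^A$, such that whenever $s$ is a semi-terminal state at step $h$ with joint reward distribution $\mathcal{R}_h(s)\in\mathcal{D}$ over its actions, $V_h(s)=f_h(\mathcal{R}_h(s))$. Then there exists an episodic tabular MDP with $A$ actions, horizon $H$, at most $S\le A^{\ell}+\ell+1$ states and deterministic transitions, and an initial state $s_1$, for which $\frac{V^{\pi}_1(s_1)}{V^*_1(s_1)}\le A^{1-\ell/2}$, where $V^*_1(s_1)$ is the optimal value among $\ell$-step lookahead policies. Moreover, in the constructed environments there exists an MPC agent (for some choice of values) whose value equals $V^*_1(s_1)$.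
   Context: Episodic tabular MDP: finite state space $\mathcal{S}$, $A$ actions, horizon $H$, rewards in $[0,1]$ with distributions $\mathcal{R}_h(s,a)$, transitions $P_h$, independent across steps (arbitrarily correlated across state-actions within a step). $\ell$-step lookahead information $I_{h,\ell_h}(s)$ at step $h$ in state $s$ ($\ell_h=\min\{\ell,H-h+1\}$) consists of the realized rewards and next states along all trajectories from $s$ over steps $h,\dots,h+\ell_h-1$ under every deterministic Markov policy; for a deterministic Markov policy $\phi$, $\mathfrak{R}_{t\mid h}(s,\phi,I)$ and $\mathfrak{s}_{t\mid h}(s,\phi,I)$ denote the reward at step $t$ and the state at step $t$ obtained from $s_h=s$ following $\phi$ under the realization $I$. An $\ell$-step lookahead policy chooses actions using the current state and the lookahead observed at each step. An $\ell$-step MPC agent is specified by values $V_h(s)$ for all $h,s$; at each step $h$ in state $s$, upon observing $I=I_{h,\ell_h}(s)$, it computes $\phi\in\arg\max_{\phi}\{\sum_{t=h}^{h+\ell_h-1}\mathfrak{R}_{t\mid h}(s,\phi,I)+V_{h+\ell_h}(\mathfrak{s}_{h+\ell_h\mid h}(s,\phi,I))\}$ over deterministic Markov policies, plays only $\phi_h(s)$, and repeats at the next step with the updated lookahead. A state $s_T$ is terminal if for all $h,a$ it transitions to itself with probability one and yields zero reward; a state $s$ is semi-terminal at step $h$ if every action leads from $s$ to a terminal state with probability one (rewards at $s$ may be random). *)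

theory Defs
  imports "HOL-Probability.Probability"
begin

text \<open>
  States are natural numbers in {..<nS}, actions are natural numbers in {..<A},
  steps are 1..H.  At every step h the environment draws a joint realization
  omega :: state => action => (reward, next state) from the pmf D h (arbitrary correlation
  across state-action pairs within a step); realizations of different steps are independent
  (product pmf over the steps 1..H).  An MDP is the pair (nS, D).
\<close>

type_synonym realization = "nat \<Rightarrow> nat \<Rightarrow> real \<times> nat"
type_synonym realizations = "nat \<Rightarrow> realization"
type_synonym mdp_dist = "nat \<Rightarrow> realization pmf"
type_synonym markov_policy = "nat \<Rightarrow> nat \<Rightarrow> nat"
type_synonym lookahead_info = "markov_policy \<Rightarrow> (real \<times> nat) list"
type_synonym lookahead_policy = "nat \<Rightarrow> nat \<Rightarrow> lookahead_info \<Rightarrow> nat"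

definition valid_mdp :: "nat \<Rightarrow> nat \<Rightarrow> nat \<Rightarrow> mdp_dist \<Rightarrow> bool" where
  "valid_mdp A H nS D \<longleftrightarrow>
     (\<forall>h\<in>{1..H}. \<forall>\<omega>\<in>set_pmf (D h). \<forall>s<nS. \<forall>a<A.
        fst (\<omega> s a) \<in> {0..1} \<and> snd (\<omega> s a) < nS)"

definition deterministic_transitions :: "nat \<Rightarrow> nat \<Rightarrow> nat \<Rightarrow> mdp_dist \<Rightarrow> bool" where
  "deterministic_transitions A H nS D \<longleftrightarrow>
     (\<forall>h\<in>{1..H}. \<forall>s<nS. \<forall>a<A. \<exists>s'. \<forall>\<omega>\<in>set_pmf (D h). snd (\<omega> s a) = s')"

definition terminal_state :: "nat \<Rightarrow> nat \<Rightarrow> nat \<Rightarrow> mdp_dist \<Rightarrow> nat \<Rightarrow> bool" where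
  "terminal_state A H nS D sT \<longleftrightarrow> sT < nS \<and>
     (\<forall>h\<in>{1..H}. \<forall>a<A. \<forall>\<omega>\<in>set_pmf (D h). \<omega> sT a = (0, sT))"

definition semi_terminal :: "nat \<Rightarrow> nat \<Rightarrow> nat \<Rightarrow> mdp_dist \<Rightarrow> nat \<Rightarrow> nat \<Rightarrow> bool" where
  "semi_terminal A H nS D h s \<longleftrightarrow> s < nS \<and>
     (\<forall>a<A. \<forall>\<omega>\<in>set_pmf (D h). terminal_state A H nS D (snd (\<omega> s a)))"

definition reward_dist :: "nat \<Rightarrow> mdp_dist \<Rightarrow> nat \<Rightarrow> nat \<Rightarrow> (nat \<Rightarrow> real) pmf" where
  "reward_dist A D h s = map_pmf (\<lambda>\<omega> a. if a < A then fst (\<omega> s a) else 0) (D h)"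

definition valid_markov_policy :: "nat \<Rightarrow> markov_policy \<Rightarrow> bool" where
  "valid_markov_policy A \<phi> \<longleftrightarrow> (\<forall>t x. \<phi> t x < A)"

text \<open>Trajectory (list of (reward at step t, state at step t+1)) of n steps from state x at step t.\<close>
fun run :: "realizations \<Rightarrow> markov_policy \<Rightarrow> nat \<Rightarrow> nat \<Rightarrow> nat \<Rightarrow> (real \<times> nat) list" where
  "run \<omega>s \<phi> t x 0 = []"
| "run \<omega>s \<phi> t x (Suc n) = \<omega>s t x (\<phi> t x) # run \<omega>s \<phi> (Suc t) (snd (\<omega>s t x (\<phi> t x))) n"

definition horizon_len :: "nat \<Rightarrow> nat \<Rightarrow> nat \<Rightarrow> nat" where
  "horizon_len H l h = min l (H - h + 1)"

text \<open>The l-step lookahead information I_{h,l_h}(s): for every deterministic Markov policy the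
  realized rewards and next states along its trajectory from s over steps h..h+l_h-1.\<close>
definition lookahead :: "nat \<Rightarrow> nat \<Rightarrow> nat \<Rightarrow> nat \<Rightarrow> nat \<Rightarrow> realizations \<Rightarrow> lookahead_info" where
  "lookahead A H l h s \<omega>s =
     (\<lambda>\<phi>. if valid_markov_policy A \<phi> then run \<omega>s \<phi> h s (horizon_len H l h) else [])"

definition is_lookahead_policy :: "nat \<Rightarrow> lookahead_policy \<Rightarrow> bool" where
  "is_lookahead_policy A \<pi> \<longleftrightarrow> (\<forall>h x I. \<pi> h x I < A)"

fun play :: "nat \<Rightarrow> nat \<Rightarrow> nat \<Rightarrow> lookahead_policy \<Rightarrow> realizations \<Rightarrow> nat \<Rightarrow> nat \<Rightarrow> nat \<Rightarrow> real" where
  "play A H l \<pi> \<omega>s 0 h x = 0"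
| "play A H l \<pi> \<omega>s (Suc n) h x =
     (let a = \<pi> h x (lookahead A H l h x \<omega>s)
      in fst (\<omega>s h x a) + play A H l \<pi> \<omega>s n (Suc h) (snd (\<omega>s h x a)))"

definition policy_value :: "nat \<Rightarrow> nat \<Rightarrow> nat \<Rightarrow> mdp_dist \<Rightarrow> lookahead_policy \<Rightarrow> nat \<Rightarrow> real" where
  "policy_value A H l D \<pi> s1 =
     measure_pmf.expectation (Pi_pmf {1..H} (\<lambda>_ _. (0, 0)) D) (\<lambda>\<omega>s. play A H l \<pi> \<omega>s H 1 s1)"

definition opt_value :: "nat \<Rightarrow> nat \<Rightarrow> nat \<Rightarrow> mdp_dist \<Rightarrow> nat \<Rightarrow> real" where
  "opt_value A H l D s1 = (SUP \<pi>\<in>{\<pi>. is_lookahead_policy A \<pi>}. policy_value A H l D \<pi> s1)"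

definition mpc_objective :: "nat \<Rightarrow> nat \<Rightarrow> (nat \<Rightarrow> nat \<Rightarrow> real) \<Rightarrow> nat \<Rightarrow> lookahead_info \<Rightarrow> markov_policy \<Rightarrow> real" where
  "mpc_objective H l V h I \<phi> =
     (let L = horizon_len H l h; tr = I \<phi>
      in (\<Sum>k<L. fst (tr ! k)) + (if h + L \<le> H then V (h + L) (snd (tr ! (L - 1))) else 0))"

definition mpc_argmax :: "nat \<Rightarrow> nat \<Rightarrow> nat \<Rightarrow> (nat \<Rightarrow> nat \<Rightarrow> real) \<Rightarrow> nat \<Rightarrow> lookahead_info \<Rightarrow> markov_policy set" where
  "mpc_argmax A H l V h I = {\<phi>. valid_markov_policy A \<phi> \<and>
     (\<forall>\<psi>. valid_markov_policy A \<psi> \<longrightarrow> mpc_objective H l V h I \<psi> \<le> mpc_objective H l V h I \<phi>)}"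

text \<open>pi is an l-step MPC agent with values V: at each step h in state x, upon observing the
  lookahead I it plays phi_h(x) for some maximizer phi (arbitrary tie-breaking).\<close>
definition is_mpc_agent :: "nat \<Rightarrow> nat \<Rightarrow> nat \<Rightarrow> (nat \<Rightarrow> nat \<Rightarrow> real) \<Rightarrow> lookahead_policy \<Rightarrow> bool" where
  "is_mpc_agent A H l V \<pi> \<longleftrightarrow> is_lookahead_policy A \<pi> \<and>
     (\<forall>h\<in>{1..H}. \<forall>x \<omega>s. \<exists>\<phi>\<in>mpc_argmax A H l V h (lookahead A H l h x \<omega>s).
        \<pi> h x (lookahead A H l h x \<omega>s) = \<phi> h x)"

end

theory Submission
  imports Defs
begin

(*
  Every hard instance starts in state 1 with a choice: action 0 enters a reward-free complete
  A-ary tree (or a chain) whose N = A^(l-1) leaves are occupied at step l + 1, where a single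
  uniformly drawn leaf pays 1; every other action exits with reward r. Step l + 1 is
  semi-terminal with the same reward distribution in every instance, so there the MPC agent's
  values are fixed numbers w(0) and w(2 + j); since its first lookahead window ends just before
  the lottery, it decides by comparing r + w(0) with w(2 + j).
  Put kappa = A^(1 - l/2). If some leaf has w(2 + j0) >= w(0) + kappa, collapse the tree to a
  chain leading to j0 and take r = 1/(N kappa) < kappa: the agent enters and earns 1/N = kappa r,
  while exiting is optimal. Otherwise keep the tree and take r = kappa: the agent exits and
  earns kappa, whereas a policy that enters sees the winning leaf from step 2 on, steers to it
  and earns 1; such a policy is itself an MPC agent for suitable values.
*)

section \<open>Trajectories of Markov policies\<close>

fun run_state :: "realizations \<Rightarrow> markov_policy \<Rightarrow> nat \<Rightarrow> nat \<Rightarrow> nat \<Rightarrow> nat" where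
  "run_state \<omega>s \<phi> t x 0 = x"
| "run_state \<omega>s \<phi> t x (Suc n) = run_state \<omega>s \<phi> (Suc t) (snd (\<omega>s t x (\<phi> t x))) n"

fun run_reward :: "realizations \<Rightarrow> markov_policy \<Rightarrow> nat \<Rightarrow> nat \<Rightarrow> nat \<Rightarrow> real" where
  "run_reward \<omega>s \<phi> t x 0 = 0"
| "run_reward \<omega>s \<phi> t x (Suc n) =
     fst (\<omega>s t x (\<phi> t x)) + run_reward \<omega>s \<phi> (Suc t) (snd (\<omega>s t x (\<phi> t x))) n"

lemma sum_fst_run: "(\<Sum>k<n. fst (run \<omega>s \<phi> t x n ! k)) = run_reward \<omega>s \<phi> t x n"
proof (induction n arbitrary: t x)
  case (Suc n)
  then show ?case
    unfolding sum.lessThan_Suc_shift by simp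
qed simp

lemma snd_last_run: "snd (run \<omega>s \<phi> t x (Suc n) ! n) = run_state \<omega>s \<phi> t x (Suc n)"
  by (induction n arbitrary: t x) simp_all

lemma run_reward_add:
  "run_reward \<omega>s \<phi> t x (m + n) =
     run_reward \<omega>s \<phi> t x m + run_reward \<omega>s \<phi> (t + m) (run_state \<omega>s \<phi> t x m) n"
  by (induction m arbitrary: t x) auto

lemma run_state_absorbing:
  "(\<And>i a. t \<le> i \<Longrightarrow> i < t + n \<Longrightarrow> snd (\<omega>s i x a) = x) \<Longrightarrow> run_state \<omega>s \<phi> t x n = x"
  by (induction n arbitrary: t) (auto simp: Suc_le_eq)

lemma run_reward_eq_0:
  "(\<And>i y a. t \<le> i \<Longrightarrow> i < t + n \<Longrightarrow> fst (\<omega>s i y a) = 0) \<Longrightarrow> run_reward \<omega>s \<phi> t x n = 0"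
  by (induction n arbitrary: t x) (auto simp: Suc_le_eq)

lemma play_eq_0:
  "(\<And>i y a. t \<le> i \<Longrightarrow> i < t + n \<Longrightarrow> fst (\<omega>s i y a) = 0) \<Longrightarrow> play A H l \<pi> \<omega>s n t x = 0"
  by (induction n arbitrary: t x) (auto simp: Suc_le_eq Let_def)

lemma play_absorbing_eq_0:
  "(\<And>i a. t \<le> i \<Longrightarrow> i < t + n \<Longrightarrow> \<omega>s i x a = (0, x)) \<Longrightarrow> play A H l \<pi> \<omega>s n t x = 0"
  by (induction n arbitrary: t) (auto simp: Suc_le_eq Let_def)

lemma run_cong:
  "(\<And>i. t \<le> i \<Longrightarrow> i < t + n \<Longrightarrow> \<omega>s i = \<omega>s' i) \<Longrightarrow> run \<omega>s \<phi> t x n = run \<omega>s' \<phi> t x n"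
  by (induction n arbitrary: t x) (auto simp: Suc_le_eq)

lemma mpc_objective_lookahead:
  assumes "valid_markov_policy A \<phi>" "horizon_len H l h = Suc m"
  shows "mpc_objective H l V h (lookahead A H l h x \<omega>s) \<phi> =
     run_reward \<omega>s \<phi> h x (Suc m) +
     (if h + Suc m \<le> H then V (h + Suc m) (run_state \<omega>s \<phi> h x (Suc m)) else 0)"
  using assms sum_fst_run[where n = "Suc m" and t = h] snd_last_run[where n = m and t = h]
  by (simp add: mpc_objective_def lookahead_def Let_def)

section \<open>Existence of MPC agents\<close>

fun run_actions :: "realizations \<Rightarrow> nat list \<Rightarrow> nat \<Rightarrow> nat \<Rightarrow> (real \<times> nat) list" where
  "run_actions \<omega>s [] t x = []"
| "run_actions \<omega>s (a # as) t x = \<omega>s t x a # run_actions \<omega>s as (Suc t) (snd (\<omega>s t x a))"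

fun policy_actions :: "realizations \<Rightarrow> markov_policy \<Rightarrow> nat \<Rightarrow> nat \<Rightarrow> nat \<Rightarrow> nat list" where
  "policy_actions \<omega>s \<phi> t x 0 = []"
| "policy_actions \<omega>s \<phi> t x (Suc n) =
     \<phi> t x # policy_actions \<omega>s \<phi> (Suc t) (snd (\<omega>s t x (\<phi> t x))) n"

lemma run_eq_run_actions: "run \<omega>s \<phi> t x n = run_actions \<omega>s (policy_actions \<omega>s \<phi> t x n) t x"
  by (induction n arbitrary: t x) auto

lemma policy_actions_in_lists:
  "valid_markov_policy A \<phi> \<Longrightarrow>
     policy_actions \<omega>s \<phi> t x n \<in> {as. set as \<subseteq> {..<A} \<and> length as = n}"
  by (induction n arbitrary: t x) (auto simp: valid_markov_policy_def)

text \<open>A Markov policy enters the objective only through the finitely many action sequences it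
  plays along the window, so the maximum exists.\<close>
lemma mpc_argmax_nonempty:
  assumes "A > 0"
  shows "mpc_argmax A H l V h (lookahead A H l h x \<omega>s) \<noteq> {}"
proof -
  let ?I = "lookahead A H l h x \<omega>s"
  let ?L = "horizon_len H l h"
  let ?F = "\<lambda>tr. (\<Sum>k<?L. fst (tr ! k)) + (if h + ?L \<le> H then V (h + ?L) (snd (tr ! (?L - 1))) else 0)"
  let ?O = "(\<lambda>\<phi>. mpc_objective H l V h ?I \<phi>) ` {\<phi>. valid_markov_policy A \<phi>}"
  have "?O \<subseteq> (\<lambda>as. ?F (run_actions \<omega>s as h x)) ` {as. set as \<subseteq> {..<A} \<and> length as = ?L}"
  proof
    fix v assume "v \<in> ?O"
    then obtain \<phi> where v: "v = mpc_objective H l V h ?I \<phi>" and \<phi>: "valid_markov_policy A \<phi>"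
      by auto
    have "v = ?F (run_actions \<omega>s (policy_actions \<omega>s \<phi> h x ?L) h x)"
      using \<phi> by (simp add: v mpc_objective_def lookahead_def run_eq_run_actions Let_def)
    then show "v \<in> (\<lambda>as. ?F (run_actions \<omega>s as h x)) ` {as. set as \<subseteq> {..<A} \<and> length as = ?L}"
      using policy_actions_in_lists[OF \<phi>] by blast
  qed
  then have fin: "finite ?O"
    by (rule finite_subset) (intro finite_imageI finite_lists_length_eq, simp)
  have "valid_markov_policy A (\<lambda>_ _. 0)"
    using assms by (simp add: valid_markov_policy_def)
  then have "?O \<noteq> {}" by blast
  with fin have "Max ?O \<in> ?O"
    by (rule Max_in)
  then obtain \<phi> where "valid_markov_policy A \<phi>" "mpc_objective H l V h ?I \<phi> = Max ?O"
    by auto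
  then have "\<phi> \<in> mpc_argmax A H l V h ?I"
    unfolding mpc_argmax_def using Max_ge[OF fin] by auto
  then show ?thesis by blast
qed

definition some_mpc_agent :: "nat \<Rightarrow> nat \<Rightarrow> nat \<Rightarrow> (nat \<Rightarrow> nat \<Rightarrow> real) \<Rightarrow> lookahead_policy" where
  "some_mpc_agent A H l V h x I =
     (if mpc_argmax A H l V h I \<noteq> {} then (SOME \<phi>. \<phi> \<in> mpc_argmax A H l V h I) h x else 0)"

lemma is_mpc_agent_some_mpc_agent:
  assumes "A > 0"
  shows "is_mpc_agent A H l V (some_mpc_agent A H l V)"
proof -
  have some_in: "(SOME \<phi>. \<phi> \<in> M) \<in> M" if "M \<noteq> {}" for M :: "markov_policy set"
    using that by (simp add: some_in_eq)
  have "some_mpc_agent A H l V h x I < A" for h x I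
  proof (cases "mpc_argmax A H l V h I = {}")
    case False
    then show ?thesis
      using some_in[OF False] by (simp add: some_mpc_agent_def mpc_argmax_def valid_markov_policy_def)
  qed (simp add: some_mpc_agent_def assms)
  then have "is_lookahead_policy A (some_mpc_agent A H l V)"
    by (simp add: is_lookahead_policy_def)
  moreover have "\<exists>\<phi>\<in>mpc_argmax A H l V h (lookahead A H l h x \<omega>s).
      some_mpc_agent A H l V h x (lookahead A H l h x \<omega>s) = \<phi> h x" for h x \<omega>s
    using some_in[OF mpc_argmax_nonempty[OF assms]] mpc_argmax_nonempty[OF assms]
    by (auto simp: some_mpc_agent_def)
  ultimately show ?thesis
    unfolding is_mpc_agent_def by blast
qed

lemma opt_value_eqI:
  assumes "\<And>\<pi>. is_lookahead_policy A \<pi> \<Longrightarrow> policy_value A H l D \<pi> s \<le> c"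
    and "is_lookahead_policy A \<pi>\<^sub>0" and "policy_value A H l D \<pi>\<^sub>0 s = c"
  shows "opt_value A H l D s = c"
  unfolding opt_value_def by (rule cSup_eq_maximum) (use assms in auto)

section \<open>The hard instances\<close>

text \<open>State 0 is terminal and state 1 is initial. At the inner steps 2, ..., l the state 2 + j
  is node j of a complete A-ary tree, at depth k - 2 at step k; its N = A^(l-1) nodes of depth
  l - 1 are the leaves. In the chain variant every inner move leads to 2 + j0 instead.\<close>
definition start_realization :: "real \<Rightarrow> realization" where
  "start_realization r = (\<lambda>s a. if s = 1 then (if a = 0 then (0, 2) else (r, 0)) else (0, 0))"

definition inner_realization :: "nat \<Rightarrow> nat \<Rightarrow> bool \<Rightarrow> nat \<Rightarrow> realization" where
  "inner_realization A N tree j0 =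
     (\<lambda>s a. if 2 \<le> s then (0, if tree then 2 + ((s - 2) * A + a) mod N else 2 + j0) else (0, 0))"

definition leaf_realization :: "nat \<Rightarrow> realization" where
  "leaf_realization J = (\<lambda>s a. (if s = J + 2 then 1 else 0, 0))"

definition hard_mdp :: "nat \<Rightarrow> nat \<Rightarrow> bool \<Rightarrow> real \<Rightarrow> nat \<Rightarrow> mdp_dist" where
  "hard_mdp A l tree r j0 h =
     (if h = 1 then return_pmf (start_realization r)
      else if h \<le> l then return_pmf (inner_realization A (A ^ (l - 1)) tree j0)
      else if h = l + 1 then map_pmf leaf_realization (pmf_of_set {..<A ^ (l - 1)})
      else return_pmf (\<lambda>_ _. (0, 0)))"

lemma reward_dist_hard_mdp_leaf_step:
  "1 \<le> l \<Longrightarrow> reward_dist A (hard_mdp A l tree r j0) (l + 1) s =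
     reward_dist A (hard_mdp A l tree' r' j0') (l + 1) s"
  by (simp add: reward_dist_def hard_mdp_def)

lemma tree_size_bound: "1 \<le> A \<Longrightarrow> 1 \<le> l \<Longrightarrow> A ^ (l - 1) + 2 \<le> A ^ l + l + 1"
  using power_increasing[of "l - 1" l A] by simp

locale hard_instance =
  fixes A l H :: nat and tree :: bool and r :: real and j0 :: nat
  assumes l_ge_2: "l \<ge> 2" and A_ge_2: "A \<ge> 2" and H_gt_l: "H \<ge> l + 1"
    and j0_lt_N: "j0 < A ^ (l - 1)" and r_nonneg: "0 \<le> r" and r_le_1: "r \<le> 1"
begin

abbreviation "N \<equiv> A ^ (l - 1)"
abbreviation "D \<equiv> hard_mdp A l tree r j0"
abbreviation "P \<equiv> Pi_pmf {1..H} (\<lambda>_ _. (0, 0)) D"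

lemma N_pos: "0 < N"
  using A_ge_2 by simp

lemma set_pmf_D:
  "set_pmf (D h) =
     (if h = 1 then {start_realization r}
      else if h \<le> l then {inner_realization A N tree j0}
      else if h = l + 1 then leaf_realization ` {..<N}
      else {\<lambda>_ _. (0, 0)})"
proof -
  have "set_pmf (pmf_of_set {..<N}) = {..<N}"
    using N_pos by (subst set_pmf_of_set) (auto simp: lessThan_empty_iff)
  then show ?thesis
    by (simp add: hard_mdp_def)
qed

definition supported :: "realizations \<Rightarrow> bool" where
  "supported \<omega>s \<longleftrightarrow> (\<forall>h\<in>{1..H}. \<omega>s h \<in> set_pmf (D h))"

lemma AE_supported: "AE \<omega>s in measure_pmf P. supported \<omega>s"
  unfolding AE_measure_pmf_iff set_Pi_pmf[OF finite_atLeastAtMost] supported_def PiE_dflt_def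
  by auto

lemma ex_supported: "\<exists>\<omega>s. supported \<omega>s"
proof -
  obtain \<omega>s where "\<omega>s \<in> set_pmf P"
    using set_pmf_not_empty by (metis ex_in_conv)
  then show ?thesis
    using AE_supported unfolding AE_measure_pmf_iff by blast
qed

lemma finite_set_pmf_P: "finite (set_pmf P)"
  unfolding set_Pi_pmf[OF finite_atLeastAtMost]
  by (rule finite_PiE_dflt) (auto simp: set_pmf_D)

lemma supportedD: "supported \<omega>s \<Longrightarrow> 1 \<le> h \<Longrightarrow> h \<le> H \<Longrightarrow> \<omega>s h \<in> set_pmf (D h)"
  by (simp add: supported_def)

lemma supported_start: "supported \<omega>s \<Longrightarrow> \<omega>s 1 = start_realization r"
  using supportedD[of \<omega>s 1] H_gt_l unfolding set_pmf_D by auto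

lemma supported_inner:
  "supported \<omega>s \<Longrightarrow> 2 \<le> h \<Longrightarrow> h \<le> l \<Longrightarrow> \<omega>s h = inner_realization A N tree j0"
  using supportedD[of \<omega>s h] H_gt_l unfolding set_pmf_D by auto

lemma supported_leaf:
  assumes "supported \<omega>s"
  obtains J where "J < N" "\<omega>s (l + 1) = leaf_realization J"
  using assms supportedD[of \<omega>s "l + 1"] H_gt_l l_ge_2 unfolding set_pmf_D by auto

lemma supported_late: "supported \<omega>s \<Longrightarrow> l + 2 \<le> h \<Longrightarrow> h \<le> H \<Longrightarrow> \<omega>s h = (\<lambda>_ _. (0, 0))"
  using supportedD[of \<omega>s h] unfolding set_pmf_D by auto

lemma supported_reward_eq_0:
  assumes "supported \<omega>s" "2 \<le> h" "h \<le> H" "h \<noteq> l + 1"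
  shows "fst (\<omega>s h y a) = 0"
proof (cases "h \<le> l")
  case True
  then show ?thesis
    using supported_inner[OF assms(1,2)] by (simp add: inner_realization_def)
qed (use assms supported_late in simp)

lemma supported_terminal:
  assumes "supported \<omega>s" "2 \<le> h" "h \<le> H"
  shows "\<omega>s h 0 a = (0, 0)"
proof -
  consider "h \<le> l" | "h = l + 1" | "l + 2 \<le> h" by linarith
  then show ?thesis
  proof cases
    case 1
    then show ?thesis using supported_inner assms by (simp add: inner_realization_def)
  next
    case 2
    obtain J where "\<omega>s (l + 1) = leaf_realization J"
      using supported_leaf[OF assms(1)] .
    then show ?thesis using 2 by (simp add: leaf_realization_def)
  next
    case 3
    then show ?thesis using supported_late assms by simp
  qed
qed

lemma valid_mdp_D: "valid_mdp A H (N + 2) D"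
  using r_nonneg r_le_1 j0_lt_N
  by (auto simp: valid_mdp_def set_pmf_D start_realization_def inner_realization_def
      leaf_realization_def N_pos)

lemma deterministic_transitions_D: "deterministic_transitions A H (N + 2) D"
  by (auto simp: deterministic_transitions_def set_pmf_D start_realization_def
      inner_realization_def leaf_realization_def)

lemma terminal_state_0: "terminal_state A H (N + 2) D 0"
  by (auto simp: terminal_state_def set_pmf_D start_realization_def
      inner_realization_def leaf_realization_def)

lemma semi_terminal_leaf_step: "s < N + 2 \<Longrightarrow> semi_terminal A H (N + 2) D (l + 1) s"
  using terminal_state_0 l_ge_2 by (auto simp: semi_terminal_def set_pmf_D leaf_realization_def)

lemma tree_child:
  assumes "tree" "supported \<omega>s" "2 \<le> k" "k \<le> l" "j < A ^ (k - 2)" "a < A"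
  shows "\<omega>s k (2 + j) a = (0, 2 + (j * A + a))" and "j * A + a < A ^ (k - 1)"
proof -
  have "j * A + a < (j + 1) * A"
    using assms(6) by simp
  also have "\<dots> \<le> A ^ (k - 2) * A"
    using assms(5) by (intro mult_le_mono1) simp
  also have "\<dots> = A ^ (k - 1)"
    using assms(3) by (simp add: power_Suc2[symmetric] Suc_diff_Suc numeral_2_eq_2)
  finally show "j * A + a < A ^ (k - 1)" .
  moreover have "A ^ (k - 1) \<le> N"
    using assms(4) A_ge_2 by (intro power_increasing) auto
  ultimately show "\<omega>s k (2 + j) a = (0, 2 + (j * A + a))"
    using supported_inner[OF assms(2-4)] assms(1) by (simp add: inner_realization_def)
qed

lemma tree_descendant:
  assumes "tree" "supported \<omega>s" "valid_markov_policy A \<phi>"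
  shows "2 \<le> k \<Longrightarrow> k + m \<le> l + 1 \<Longrightarrow> j < A ^ (k - 2) \<Longrightarrow>
    \<exists>j'. run_state \<omega>s \<phi> k (2 + j) m = 2 + j' \<and> j' < A ^ (k - 2 + m) \<and> j' div A ^ m = j"
proof (induction m arbitrary: k j)
  case (Suc m)
  define a where "a = \<phi> k (2 + j)"
  have a: "a < A"
    using assms(3) by (simp add: a_def valid_markov_policy_def)
  have k: "k \<le> l" "Suc k - 2 = k - 1" "Suc k - 2 + m = k - 2 + Suc m"
    using Suc.prems by auto
  note child = tree_child[OF assms(1,2) Suc.prems(1) k(1) Suc.prems(3) a]
  obtain j' where j': "run_state \<omega>s \<phi> (Suc k) (2 + (j * A + a)) m = 2 + j'"
      "j' < A ^ (Suc k - 2 + m)" "j' div A ^ m = j * A + a"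
    using Suc.IH[of "Suc k" "j * A + a"] Suc.prems child(2) k by auto
  have "run_state \<omega>s \<phi> k (2 + j) (Suc m) = 2 + j'"
    using child(1) j'(1) by (simp add: a_def)
  moreover have "j' div A ^ Suc m = j"
    using j'(3) a by (simp add: div_mult2_eq mult.commute[of A] power_Suc2)
  ultimately show ?case
    using j'(2)[unfolded k(3)] by blast
qed simp

lemma play_leaf_step:
  assumes "supported \<omega>s" "\<omega>s (l + 1) = leaf_realization J"
  shows "play A H l \<pi> \<omega>s (H - l) (l + 1) x = (if x = J + 2 then 1 else 0)"
proof -
  obtain m where m: "H - l = Suc m"
    using H_gt_l by (cases "H - l") auto
  have "play A H l \<pi> \<omega>s m (l + 2) y = 0" for y
    by (rule play_eq_0) (use supported_reward_eq_0[OF assms(1)] m in auto)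
  then show ?thesis
    using assms(2) m by (simp add: leaf_realization_def Let_def)
qed

lemma play_chain:
  assumes "\<not> tree" "supported \<omega>s" "\<omega>s (l + 1) = leaf_realization J"
  shows "2 \<le> k \<Longrightarrow> k \<le> l + 1 \<Longrightarrow> k + n = H + 1 \<Longrightarrow> 2 \<le> x \<Longrightarrow> (3 \<le> k \<longrightarrow> x = 2 + j0) \<Longrightarrow>
    play A H l \<pi> \<omega>s n k x = (if j0 = J then 1 else 0)"
proof (induction n arbitrary: k x)
  case (Suc n)
  show ?case
  proof (cases "k = l + 1")
    case True
    then have "Suc n = H - l" "x = 2 + j0"
      using Suc.prems l_ge_2 by auto
    then show ?thesis
      using play_leaf_step[OF assms(2,3), of \<pi> x] True by auto
  next
    case False
    then have "k \<le> l"
      using Suc.prems by simp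
    then show ?thesis
      using Suc.IH[of "Suc k" "2 + j0"] Suc.prems supported_inner[OF assms(2)] assms(1)
      by (simp add: inner_realization_def Let_def)
  qed
qed (use H_gt_l in simp)

lemma play_le_1:
  assumes "supported \<omega>s"
  shows "2 \<le> k \<Longrightarrow> k + n \<le> H + 1 \<Longrightarrow> play A H l \<pi> \<omega>s n k x \<le> 1"
proof (induction n arbitrary: k x)
  case (Suc n)
  show ?case
  proof (cases "k = l + 1")
    case True
    obtain J where "\<omega>s (l + 1) = leaf_realization J"
      using supported_leaf[OF assms] .
    moreover have "play A H l \<pi> \<omega>s n (Suc k) y = 0" for y
      by (rule play_eq_0) (use supported_reward_eq_0[OF assms] True Suc.prems in auto)
    ultimately show ?thesis
      using True by (simp add: leaf_realization_def Let_def)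
  next
    case False
    then show ?thesis
      using Suc supported_reward_eq_0[OF assms, of k] by (simp add: Let_def)
  qed
qed simp

definition first_window :: realizations where
  "first_window = (\<lambda>h. if h = 1 then start_realization r else inner_realization A N tree j0)"

lemma horizon_len_1: "horizon_len H l 1 = l"
  using H_gt_l by (simp add: horizon_len_def)

lemma lookahead_first_window:
  assumes "supported \<omega>s"
  shows "lookahead A H l 1 1 \<omega>s = lookahead A H l 1 1 first_window"
proof -
  have run_eq: "run \<omega>s \<phi> 1 1 l = run first_window \<phi> 1 1 l" for \<phi>
    by (rule run_cong)
      (use supported_start[OF assms] supported_inner[OF assms] in \<open>auto simp: first_window_def\<close>)
  show ?thesis
    unfolding lookahead_def horizon_len_1 run_eq ..
qed

lemma mpc_objective_start:
  assumes "supported \<omega>s" "valid_markov_policy A \<phi>"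
  shows "mpc_objective H l V 1 (lookahead A H l 1 1 \<omega>s) \<phi> =
    (if \<phi> 1 1 = 0 then V (l + 1) (run_state \<omega>s \<phi> 2 2 (l - 1)) else r + V (l + 1) 0)"
proof -
  have l: "l = Suc (l - 1)"
    using l_ge_2 by simp
  have "mpc_objective H l V 1 (lookahead A H l 1 1 \<omega>s) \<phi> =
      run_reward \<omega>s \<phi> 1 1 l + V (l + 1) (run_state \<omega>s \<phi> 1 1 l)"
    using mpc_objective_lookahead[OF assms(2), of H l 1 "l - 1" V 1 \<omega>s] horizon_len_1 l H_gt_l
    by simp
  moreover have "run_reward \<omega>s \<phi> 1 1 l =
      fst (\<omega>s 1 1 (\<phi> 1 1)) + run_reward \<omega>s \<phi> 2 (snd (\<omega>s 1 1 (\<phi> 1 1))) (l - 1)"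
    "run_state \<omega>s \<phi> 1 1 l = run_state \<omega>s \<phi> 2 (snd (\<omega>s 1 1 (\<phi> 1 1))) (l - 1)"
    by (subst l, simp add: numeral_2_eq_2)+
  moreover have "run_reward \<omega>s \<phi> 2 y (l - 1) = 0" for y
    by (rule run_reward_eq_0) (use supported_reward_eq_0[OF assms(1)] H_gt_l in auto)
  moreover have "run_state \<omega>s \<phi> 2 0 (l - 1) = 0"
    by (rule run_state_absorbing) (use supported_terminal[OF assms(1)] H_gt_l in auto)
  ultimately show ?thesis
    using supported_start[OF assms(1)] by (simp add: start_realization_def)
qed

lemma play_start:
  assumes "supported \<omega>s"
  shows "play A H l \<pi> \<omega>s H 1 1 =
    (if \<pi> 1 1 (lookahead A H l 1 1 first_window) = 0 then play A H l \<pi> \<omega>s (H - 1) 2 2 else r)"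
proof -
  have H: "H = Suc (H - 1)"
    using H_gt_l by simp
  have "play A H l \<pi> \<omega>s (H - 1) 2 0 = 0"
    by (rule play_absorbing_eq_0) (use supported_terminal[OF assms] H_gt_l in auto)
  then show ?thesis
    using supported_start[OF assms] lookahead_first_window[OF assms]
    by (subst H) (simp add: start_realization_def Let_def numeral_2_eq_2)
qed

lemma policy_value_eqI:
  assumes "\<And>\<omega>s. supported \<omega>s \<Longrightarrow> play A H l \<pi> \<omega>s H 1 1 = c"
  shows "policy_value A H l D \<pi> 1 = c"
proof -
  have AE_play: "AE \<omega>s in measure_pmf P. play A H l \<pi> \<omega>s H 1 1 = c"
    using AE_supported by eventually_elim (rule assms)
  have "policy_value A H l D \<pi> 1 = measure_pmf.expectation P (\<lambda>_. c)"
    unfolding policy_value_def by (rule integral_cong_AE) (use AE_play in auto)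
  then show ?thesis
    by simp
qed

lemma policy_value_exit:
  "\<pi> 1 1 (lookahead A H l 1 1 first_window) \<noteq> 0 \<Longrightarrow> policy_value A H l D \<pi> 1 = r"
  by (rule policy_value_eqI) (metis play_start)

lemma expectation_leaf_reward:
  assumes "j < N"
  shows "measure_pmf.expectation P (\<lambda>\<omega>s. fst (\<omega>s (l + 1) (2 + j) 0)) = 1 / N"
proof -
  have "measure_pmf.expectation P (\<lambda>\<omega>s. fst (\<omega>s (l + 1) (2 + j) 0)) =
      measure_pmf.expectation (map_pmf (\<lambda>\<omega>s. \<omega>s (l + 1)) P) (\<lambda>w. fst (w (2 + j) 0))"
    by simp
  also have "map_pmf (\<lambda>\<omega>s. \<omega>s (l + 1)) P = map_pmf leaf_realization (pmf_of_set {..<N})"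
    using H_gt_l l_ge_2 by (subst Pi_pmf_component) (auto simp: hard_mdp_def)
  also have "measure_pmf.expectation \<dots> (\<lambda>w. fst (w (2 + j) 0)) =
      measure_pmf.expectation (pmf_of_set {..<N}) (\<lambda>J. if j = J then 1 else 0)"
    by (simp add: leaf_realization_def)
  also have "\<dots> = 1 / N"
    using assms N_pos by (subst integral_pmf_of_set) auto
  finally show ?thesis .
qed

lemma policy_value_enter_chain:
  assumes "\<not> tree" "\<pi> 1 1 (lookahead A H l 1 1 first_window) = 0"
  shows "policy_value A H l D \<pi> 1 = 1 / N"
proof -
  have AE_play: "AE \<omega>s in measure_pmf P. play A H l \<pi> \<omega>s H 1 1 = fst (\<omega>s (l + 1) (2 + j0) 0)"
    using AE_supported
  proof eventually_elim
    case (elim \<omega>s)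
    obtain J where J: "J < N" "\<omega>s (l + 1) = leaf_realization J"
      using supported_leaf[OF elim] .
    have "play A H l \<pi> \<omega>s (H - 1) 2 2 = (if j0 = J then 1 else 0)"
      by (rule play_chain[OF assms(1) elim J(2)]) (use l_ge_2 H_gt_l in auto)
    then show ?case
      using assms(2) J play_start[OF elim] by (simp add: leaf_realization_def)
  qed
  have "policy_value A H l D \<pi> 1 = measure_pmf.expectation P (\<lambda>\<omega>s. fst (\<omega>s (l + 1) (2 + j0) 0))"
    unfolding policy_value_def by (rule integral_cong_AE) (use AE_play in auto)
  then show ?thesis
    using expectation_leaf_reward[OF j0_lt_N] by simp
qed

lemma policy_value_le_1: "policy_value A H l D \<pi> 1 \<le> 1"
proof -
  have "AE \<omega>s in measure_pmf P. play A H l \<pi> \<omega>s H 1 1 \<le> 1"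
    using AE_supported
  proof eventually_elim
    case (elim \<omega>s)
    have "play A H l \<pi> \<omega>s (H - 1) 2 2 \<le> 1"
      using play_le_1[OF elim, of 2 "H - 1"] H_gt_l by auto
    then show ?case
      using r_le_1 play_start[OF elim] by simp
  qed
  then have "measure_pmf.expectation P (\<lambda>\<omega>s. play A H l \<pi> \<omega>s H 1 1) \<le> measure_pmf.expectation P (\<lambda>_. 1)"
    by (intro integral_mono_AE integrable_measure_pmf_finite finite_set_pmf_P)
  then show ?thesis
    unfolding policy_value_def by simp
qed

lemma mpc_first_action:
  assumes "is_mpc_agent A H l V \<pi>"
  obtains \<phi> where "\<phi> \<in> mpc_argmax A H l V 1 (lookahead A H l 1 1 first_window)"
    "\<pi> 1 1 (lookahead A H l 1 1 first_window) = \<phi> 1 1"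
proof -
  obtain \<omega>s where "supported \<omega>s"
    using ex_supported ..
  then show ?thesis
    using that assms H_gt_l unfolding is_mpc_agent_def lookahead_first_window[symmetric] by fastforce
qed

lemma mpc_exits:
  assumes mpc: "is_mpc_agent A H l V \<pi>"
    and leaves_worse: "\<And>\<phi> \<omega>s. valid_markov_policy A \<phi> \<Longrightarrow> supported \<omega>s \<Longrightarrow>
      V (l + 1) (run_state \<omega>s \<phi> 2 2 (l - 1)) < r + V (l + 1) 0"
  shows "\<pi> 1 1 (lookahead A H l 1 1 first_window) \<noteq> 0"
proof
  assume enter: "\<pi> 1 1 (lookahead A H l 1 1 first_window) = 0"
  obtain \<omega>s where \<omega>s: "supported \<omega>s"
    using ex_supported ..
  obtain \<phi> where \<phi>: "\<phi> \<in> mpc_argmax A H l V 1 (lookahead A H l 1 1 \<omega>s)" "\<phi> 1 1 = 0"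
    using mpc_first_action[OF mpc] enter unfolding lookahead_first_window[OF \<omega>s] by metis
  have exit: "valid_markov_policy A (\<lambda>_ _. 1)"
    using A_ge_2 by (simp add: valid_markov_policy_def)
  with \<phi> show False
    using mpc_objective_start[OF \<omega>s exit] mpc_objective_start[OF \<omega>s] leaves_worse[OF _ \<omega>s]
    unfolding mpc_argmax_def by fastforce
qed

lemma mpc_enters:
  assumes mpc: "is_mpc_agent A H l V \<pi>"
    and leaf_better: "\<And>\<omega>s. supported \<omega>s \<Longrightarrow>
      r + V (l + 1) 0 < V (l + 1) (run_state \<omega>s (\<lambda>_ _. 0) 2 2 (l - 1))"
  shows "\<pi> 1 1 (lookahead A H l 1 1 first_window) = 0"
proof (rule ccontr)
  assume exit: "\<pi> 1 1 (lookahead A H l 1 1 first_window) \<noteq> 0"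
  obtain \<omega>s where \<omega>s: "supported \<omega>s"
    using ex_supported ..
  obtain \<phi> where \<phi>: "\<phi> \<in> mpc_argmax A H l V 1 (lookahead A H l 1 1 \<omega>s)" "\<phi> 1 1 \<noteq> 0"
    using mpc_first_action[OF mpc] exit unfolding lookahead_first_window[OF \<omega>s] by metis
  have enter: "valid_markov_policy A (\<lambda>_ _. 0)"
    using A_ge_2 by (simp add: valid_markov_policy_def)
  with \<phi> show False
    using mpc_objective_start[OF \<omega>s enter] mpc_objective_start[OF \<omega>s] leaf_better[OF \<omega>s]
    unfolding mpc_argmax_def by fastforce
qed

text \<open>The value 2 exceeds every exit reward, so that at step 1 the agent enters the tree;
  from step 2 on every lookahead window reaches past the lottery and the values are irrelevant.\<close>
definition tree_values :: "nat \<Rightarrow> nat \<Rightarrow> real" where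
  "tree_values h s = (if h = l + 1 \<and> 2 \<le> s then 2 else 0)"

abbreviation "tree_agent \<equiv> some_mpc_agent A H l tree_values"

lemma is_mpc_agent_tree_agent: "is_mpc_agent A H l tree_values tree_agent"
  using A_ge_2 by (intro is_mpc_agent_some_mpc_agent) simp

text \<open>The path from the root to leaf J, read off the base-A digits of J.\<close>
definition leaf_policy :: "nat \<Rightarrow> markov_policy" where
  "leaf_policy J = (\<lambda>t s. (J div A ^ (l - t)) mod A)"

lemma valid_leaf_policy: "valid_markov_policy A (leaf_policy J)"
  using A_ge_2 by (simp add: valid_markov_policy_def leaf_policy_def)

lemma leaf_ancestor_lt:
  assumes "J < N" "k + m = l + 1" "2 \<le> k"
  shows "J div A ^ m < A ^ (k - 2)"
proof -
  have "l - 1 = (k - 2) + m"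
    using assms(2,3) by simp
  then have "J < A ^ (k - 2) * A ^ m"
    using assms(1) by (simp add: power_add)
  then show ?thesis
    by (rule less_mult_imp_div_less)
qed

lemma leaf_policy_reaches_leaf:
  assumes "tree" "supported \<omega>s" "J < N"
  shows "k + m = l + 1 \<Longrightarrow> 2 \<le> k \<Longrightarrow> run_state \<omega>s (leaf_policy J) k (2 + J div A ^ m) m = J + 2"
proof (induction m arbitrary: k)
  case (Suc m)
  define j where "j = J div A ^ Suc m"
  define a where "a = (J div A ^ m) mod A"
  have a: "a < A"
    using A_ge_2 by (simp add: a_def)
  have "J div A ^ Suc m = J div A ^ m div A"
    by (simp only: power_Suc2 div_mult2_eq)
  then have "j * A + a = J div A ^ m"
    by (simp add: j_def a_def div_mult_mod_eq)
  moreover have "\<omega>s k (2 + j) a = (0, 2 + (j * A + a))"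
    using tree_child(1)[OF assms(1,2) Suc.prems(2) _ leaf_ancestor_lt[OF assms(3) Suc.prems] a] Suc.prems
    by (simp add: j_def)
  moreover have "l - k = m"
    using Suc.prems(1) by simp
  then have "leaf_policy J k (2 + j) = a"
    by (simp add: leaf_policy_def a_def)
  ultimately show ?case
    using Suc.IH[of "Suc k"] Suc.prems by (simp add: j_def)
qed simp

lemma mpc_objective_tree_values:
  assumes "supported \<omega>s" "\<omega>s (l + 1) = leaf_realization J" "2 \<le> k" "k \<le> l"
    and "valid_markov_policy A \<phi>"
  shows "mpc_objective H l tree_values k (lookahead A H l k x \<omega>s) \<phi> =
    (if run_state \<omega>s \<phi> k x (l + 1 - k) = J + 2 then 1 else 0)"
proof -
  define q where "q = horizon_len H l k - (l + 2 - k)"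
  have L: "horizon_len H l k = (l + 1 - k) + Suc q" "k + horizon_len H l k \<le> H + 1"
    using assms(3,4) H_gt_l unfolding q_def horizon_len_def by auto
  have "mpc_objective H l tree_values k (lookahead A H l k x \<omega>s) \<phi> =
      run_reward \<omega>s \<phi> k x (horizon_len H l k)"
    using mpc_objective_lookahead[OF assms(5) L(1)[unfolded add_Suc_right]] L assms(3,4)
    by (auto simp: tree_values_def)
  also have "\<dots> = run_reward \<omega>s \<phi> k x (l + 1 - k) +
      run_reward \<omega>s \<phi> (l + 1) (run_state \<omega>s \<phi> k x (l + 1 - k)) (Suc q)"
    unfolding L(1) run_reward_add using assms(3,4) by simp
  also have "run_reward \<omega>s \<phi> k x (l + 1 - k) = 0"
    by (rule run_reward_eq_0) (use supported_reward_eq_0[OF assms(1)] assms(3,4) H_gt_l in auto)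
  also have "run_reward \<omega>s \<phi> (l + 1) y (Suc q) = (if y = J + 2 then 1 else 0)" for y
  proof -
    have "run_reward \<omega>s \<phi> (l + 2) z q = 0" for z
      by (rule run_reward_eq_0) (use supported_reward_eq_0[OF assms(1)] L assms(3,4) in auto)
    then show ?thesis
      using assms(2) by (simp add: leaf_realization_def)
  qed
  finally show ?thesis
    by simp
qed

lemma tree_argmax_reaches_leaf:
  assumes "tree" "supported \<omega>s" "\<omega>s (l + 1) = leaf_realization J" "J < N"
    and "k + Suc m = l + 1" "2 \<le> k"
    and "\<phi> \<in> mpc_argmax A H l tree_values k (lookahead A H l k (2 + J div A ^ Suc m) \<omega>s)"
  shows "run_state \<omega>s \<phi> k (2 + J div A ^ Suc m) (Suc m) = J + 2"
proof -
  let ?obj = "mpc_objective H l tree_values k (lookahead A H l k (2 + J div A ^ Suc m) \<omega>s)"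
  have k: "k \<le> l" "l + 1 - k = Suc m"
    using assms(5) by auto
  have "?obj (leaf_policy J) = 1"
    using mpc_objective_tree_values[OF assms(2,3,6) k(1) valid_leaf_policy]
      leaf_policy_reaches_leaf[OF assms(1,2,4) assms(5,6)] k(2) by simp
  moreover have "?obj (leaf_policy J) \<le> ?obj \<phi>" "valid_markov_policy A \<phi>"
    using assms(7) valid_leaf_policy by (auto simp: mpc_argmax_def)
  ultimately show ?thesis
    using mpc_objective_tree_values[OF assms(2,3,6) k(1)] k(2) by (auto split: if_splits)
qed

text \<open>A policy that reaches leaf J from an ancestor of J can only do so through the next
  ancestor, because the node reached after m more steps determines the node m levels up.\<close>
lemma tree_move_toward_leaf:
  assumes "tree" "supported \<omega>s" "valid_markov_policy A \<phi>" "J < N" "k + Suc m = l + 1" "2 \<le> k"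
    and reach: "run_state \<omega>s \<phi> k (2 + J div A ^ Suc m) (Suc m) = J + 2"
  shows "\<omega>s k (2 + J div A ^ Suc m) (\<phi> k (2 + J div A ^ Suc m)) = (0, 2 + J div A ^ m)"
proof -
  define j where "j = J div A ^ Suc m"
  define a where "a = \<phi> k (2 + j)"
  have a: "a < A"
    using assms(3) by (simp add: a_def valid_markov_policy_def)
  have k: "k \<le> l" "Suc k - 2 = k - 1"
    using assms(5,6) by auto
  note child = tree_child[OF assms(1,2,6) k(1) leaf_ancestor_lt[OF assms(4,5,6)] a, folded j_def]
  obtain j' where j': "run_state \<omega>s \<phi> (Suc k) (2 + (j * A + a)) m = 2 + j'"
      "j' div A ^ m = j * A + a"
    using tree_descendant[OF assms(1-3), of "Suc k" m "j * A + a"] assms(5,6) child(2) k by auto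
  have "j' = J"
    using reach j'(1) child(1) by (simp add: j_def a_def)
  then show ?thesis
    using child(1) j'(2) by (simp add: j_def a_def)
qed

lemma tree_agent_reaches_leaf:
  assumes "tree" "supported \<omega>s" "\<omega>s (l + 1) = leaf_realization J" "J < N"
  shows "k + m = l + 1 \<Longrightarrow> 2 \<le> k \<Longrightarrow> play A H l tree_agent \<omega>s (H + 1 - k) k (2 + J div A ^ m) = 1"
proof (induction m arbitrary: k)
  case 0
  then show ?case
    using play_leaf_step[OF assms(2,3), of tree_agent "2 + J"] by (simp add: add.commute)
next
  case (Suc m)
  let ?x = "2 + J div A ^ Suc m"
  have k: "k \<in> {1..H}" "H + 1 - k = Suc (H + 1 - Suc k)"
    using Suc.prems H_gt_l by auto
  obtain \<phi> where \<phi>: "\<phi> \<in> mpc_argmax A H l tree_values k (lookahead A H l k ?x \<omega>s)"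
    and act: "tree_agent k ?x (lookahead A H l k ?x \<omega>s) = \<phi> k ?x"
    using is_mpc_agent_tree_agent k(1) unfolding is_mpc_agent_def by fastforce
  have "\<omega>s k ?x (\<phi> k ?x) = (0, 2 + J div A ^ m)"
    using tree_move_toward_leaf[OF assms(1,2) _ assms(4) Suc.prems
        tree_argmax_reaches_leaf[OF assms Suc.prems \<phi>]] \<phi>
    by (simp add: mpc_argmax_def)
  then show ?case
    using Suc.IH[of "Suc k"] Suc.prems act k(2) by (simp add: Let_def)
qed

lemma tree_agent_value:
  assumes "tree"
  shows "policy_value A H l D tree_agent 1 = 1"
proof (rule policy_value_eqI)
  fix \<omega>s assume \<omega>s: "supported \<omega>s"
  have enter: "tree_agent 1 1 (lookahead A H l 1 1 first_window) = 0"
  proof (rule mpc_enters[OF is_mpc_agent_tree_agent])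
    fix \<omega>s assume "supported \<omega>s"
    then obtain j' where "run_state \<omega>s (\<lambda>_ _. 0) 2 2 (l - 1) = 2 + j'"
      using tree_descendant[OF assms _ _, of \<omega>s "\<lambda>_ _. 0" 2 "l - 1" 0] l_ge_2 A_ge_2
      by (auto simp: valid_markov_policy_def)
    then show "r + tree_values (l + 1) 0 < tree_values (l + 1) (run_state \<omega>s (\<lambda>_ _. 0) 2 2 (l - 1))"
      using r_le_1 by (simp add: tree_values_def)
  qed
  obtain J where J: "J < N" "\<omega>s (l + 1) = leaf_realization J"
    using supported_leaf[OF \<omega>s] .
  have "play A H l tree_agent \<omega>s (H + 1 - 2) 2 (2 + J div A ^ (l - 1)) = 1"
    by (rule tree_agent_reaches_leaf[OF assms \<omega>s J(2,1)]) (use l_ge_2 in auto)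
  then show "play A H l tree_agent \<omega>s H 1 1 = 1"
    using J(1) enter play_start[OF \<omega>s] by (simp add: numeral_2_eq_2)
qed

lemma chain_run_state:
  assumes "\<not> tree" "supported \<omega>s"
  shows "run_state \<omega>s \<phi> 2 2 (l - 1) = 2 + j0"
proof -
  have l: "l - 1 = Suc (l - 2)"
    using l_ge_2 by simp
  have "run_state \<omega>s \<phi> 3 (2 + j0) (l - 2) = 2 + j0"
    by (rule run_state_absorbing)
      (use supported_inner[OF assms(2)] assms(1) in \<open>auto simp: inner_realization_def\<close>)
  then show ?thesis
    using supported_inner[OF assms(2), of 2] assms(1) l_ge_2
    by (subst l) (simp add: inner_realization_def numeral_3_eq_3)
qed

lemma chain_policy_value_le:
  assumes "\<not> tree" "1 / N \<le> r"
  shows "policy_value A H l D \<pi> 1 \<le> r"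
  using policy_value_exit[of \<pi>] policy_value_enter_chain[OF assms(1), of \<pi>] assms(2)
  by (cases "\<pi> 1 1 (lookahead A H l 1 1 first_window) = 0") auto

lemma zero_values_agent_value:
  assumes "0 < r"
  shows "policy_value A H l D (some_mpc_agent A H l (\<lambda>_ _. 0)) 1 = r"
proof -
  have "is_mpc_agent A H l (\<lambda>_ _. 0) (some_mpc_agent A H l (\<lambda>_ _. 0))"
    using A_ge_2 by (intro is_mpc_agent_some_mpc_agent) simp
  then have "some_mpc_agent A H l (\<lambda>_ _. 0) 1 1 (lookahead A H l 1 1 first_window) \<noteq> 0"
    by (rule mpc_exits) (use assms in simp)
  then show ?thesis
    by (rule policy_value_exit)
qed

end

section \<open>The gap\<close>

definition has_mpc_gap ::
  "nat \<Rightarrow> nat \<Rightarrow> nat \<Rightarrow> (nat \<Rightarrow> mdp_dist \<Rightarrow> lookahead_policy) \<Rightarrow> real \<Rightarrow> bool" where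
  "has_mpc_gap A H l agent c \<longleftrightarrow>
     (\<exists>nS D s1. valid_mdp A H nS D \<and> deterministic_transitions A H nS D
        \<and> nS \<le> A ^ l + l + 1 \<and> s1 < nS
        \<and> opt_value A H l D s1 > 0
        \<and> policy_value A H l D (agent nS D) s1 \<le> c * opt_value A H l D s1
        \<and> (\<exists>V \<pi>. is_mpc_agent A H l V \<pi> \<and> policy_value A H l D \<pi> s1 = opt_value A H l D s1))"

context hard_instance
begin

lemma has_mpc_gapI:
  fixes agent :: "nat \<Rightarrow> mdp_dist \<Rightarrow> lookahead_policy"
  assumes "0 < opt_value A H l D 1"
    and "policy_value A H l D (agent (N + 2) D) 1 \<le> c * opt_value A H l D 1"
    and "is_mpc_agent A H l V \<pi>" "policy_value A H l D \<pi> 1 = opt_value A H l D 1"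
  shows "has_mpc_gap A H l agent c"
  unfolding has_mpc_gap_def
  using assms valid_mdp_D deterministic_transitions_D tree_size_bound[of A l] A_ge_2 l_ge_2
  by (intro exI[of _ "N + 2"] exI[of _ D] exI[of _ 1]) auto

lemma tree_has_mpc_gap:
  assumes "tree" "0 < r" and mpc: "is_mpc_agent A H l V (agent (N + 2) D)"
    and leaves_low: "\<And>j. j < N \<Longrightarrow> V (l + 1) (2 + j) < r + V (l + 1) 0"
  shows "has_mpc_gap A H l agent r"
proof -
  have "agent (N + 2) D 1 1 (lookahead A H l 1 1 first_window) \<noteq> 0"
  proof (rule mpc_exits[OF mpc])
    fix \<phi> \<omega>s assume "valid_markov_policy A \<phi>" "supported \<omega>s"
    then obtain j' where "run_state \<omega>s \<phi> 2 2 (l - 1) = 2 + j'" "j' < N"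
      using tree_descendant[OF assms(1), of \<omega>s \<phi> 2 "l - 1" 0] l_ge_2 by auto
    then show "V (l + 1) (run_state \<omega>s \<phi> 2 2 (l - 1)) < r + V (l + 1) 0"
      using leaves_low by simp
  qed
  then have "policy_value A H l D (agent (N + 2) D) 1 = r"
    by (rule policy_value_exit)
  moreover have "opt_value A H l D 1 = 1"
    using policy_value_le_1 is_mpc_agent_tree_agent tree_agent_value[OF assms(1)]
    by (intro opt_value_eqI) (auto simp: is_mpc_agent_def)
  ultimately show ?thesis
    using is_mpc_agent_tree_agent tree_agent_value[OF assms(1)] by (intro has_mpc_gapI) auto
qed

lemma chain_has_mpc_gap:
  fixes \<kappa> :: real
  assumes "\<not> tree" "0 < \<kappa>" "\<kappa> \<le> 1" "r = 1 / (N * \<kappa>)"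
    and mpc: "is_mpc_agent A H l V (agent (N + 2) D)"
    and leaf_high: "r + V (l + 1) 0 < V (l + 1) (2 + j0)"
  shows "has_mpc_gap A H l agent \<kappa>"
proof -
  have r: "0 < r" "1 / N \<le> r" "1 / N = \<kappa> * r"
    using assms(2-4) N_pos by (auto simp: field_simps)
  have "agent (N + 2) D 1 1 (lookahead A H l 1 1 first_window) = 0"
    by (rule mpc_enters[OF mpc]) (use leaf_high chain_run_state[OF assms(1)] in simp)
  then have "policy_value A H l D (agent (N + 2) D) 1 = 1 / N"
    by (rule policy_value_enter_chain[OF assms(1)])
  moreover have zero: "is_mpc_agent A H l (\<lambda>_ _. 0) (some_mpc_agent A H l (\<lambda>_ _. 0))"
    using A_ge_2 by (intro is_mpc_agent_some_mpc_agent) simp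
  moreover have "opt_value A H l D 1 = r"
    using chain_policy_value_le[OF assms(1) r(2)] zero zero_values_agent_value[OF r(1)]
    by (intro opt_value_eqI) (auto simp: is_mpc_agent_def)
  ultimately show ?thesis
    using zero_values_agent_value[OF r(1)] r by (intro has_mpc_gapI) auto
qed

end

lemma lookahead_ratio_bounds:
  fixes A l :: nat
  assumes "2 \<le> l" "2 \<le> A"
  defines "\<kappa> \<equiv> real A powr (1 - real l / 2)"
  shows "0 < \<kappa>" "\<kappa> \<le> 1" "1 / (real (A ^ (l - 1)) * \<kappa>) \<le> 1"
    "1 / (real (A ^ (l - 1)) * \<kappa>) < \<kappa>"
proof -
  have A: "real A \<ge> 2"
    using assms(2) by simp
  have N: "real (A ^ (l - 1)) = real A powr (real l - 1)"
    using A assms(1) by (simp add: powr_realpow[symmetric] of_nat_diff)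
  show "0 < \<kappa>"
    using A by (simp add: \<kappa>_def)
  have "\<kappa> \<le> real A powr 0"
    unfolding \<kappa>_def using A assms(1) by (intro powr_mono) auto
  then show "\<kappa> \<le> 1"
    using A by simp
  have "real (A ^ (l - 1)) * \<kappa> = real A powr (real l / 2)"
    unfolding N \<kappa>_def using A by (simp add: powr_add[symmetric])
  also have "\<dots> \<ge> real A powr 0"
    using A by (intro powr_mono) auto
  finally have N\<kappa>: "1 \<le> real (A ^ (l - 1)) * \<kappa>"
    using A by simp
  then show "1 / (real (A ^ (l - 1)) * \<kappa>) \<le> 1"
    by simp
  have "real (A ^ (l - 1)) * \<kappa> * \<kappa> = real A powr 1"
    unfolding N \<kappa>_def using A by (simp add: powr_add[symmetric])
  then have "1 < real (A ^ (l - 1)) * \<kappa> * \<kappa>"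
    using A by simp
  then show "1 / (real (A ^ (l - 1)) * \<kappa>) < \<kappa>"
    using N\<kappa> by (simp add: divide_less_eq mult.commute)
qed

theorem claim2:
  fixes l A H :: nat
    and Vproc :: "nat \<Rightarrow> mdp_dist \<Rightarrow> nat \<Rightarrow> nat \<Rightarrow> real"
    and agent :: "nat \<Rightarrow> mdp_dist \<Rightarrow> lookahead_policy"
    and f :: "nat \<Rightarrow> (nat \<Rightarrow> real) pmf \<Rightarrow> real"
  assumes "l \<ge> 2" and "A \<ge> 2" and "H \<ge> l + 1"
    and f_nonneg: "\<forall>h\<in>{1..H}. \<forall>R. f h R \<ge> 0"
    and semi_terminal_values: "\<forall>nS D. valid_mdp A H nS D \<longrightarrow>
         (\<forall>h\<in>{1..H}. \<forall>s. semi_terminal A H nS D h s \<longrightarrow>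
            Vproc nS D h s = f h (reward_dist A D h s))"
    and mpc: "\<forall>nS D. valid_mdp A H nS D \<longrightarrow> is_mpc_agent A H l (Vproc nS D) (agent nS D)"
  shows "\<exists>nS D s1. valid_mdp A H nS D \<and> deterministic_transitions A H nS D
           \<and> nS \<le> A ^ l + l + 1 \<and> s1 < nS
           \<and> opt_value A H l D s1 > 0
           \<and> policy_value A H l D (agent nS D) s1
               \<le> real A powr (1 - real l / 2) * opt_value A H l D s1
           \<and> (\<exists>V \<pi>. is_mpc_agent A H l V \<pi> \<and> policy_value A H l D \<pi> s1 = opt_value A H l D s1)"
proof -
  let ?N = "A ^ (l - 1)"
  define \<kappa> where "\<kappa> = real A powr (1 - real l / 2)"
  define r where "r = 1 / (real ?N * \<kappa>)"
  define w where "w s = f (l + 1) (reward_dist A (hard_mdp A l True 0 0) (l + 1) s)" for s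
  note \<kappa> = lookahead_ratio_bounds[OF assms(1,2), folded \<kappa>_def, folded r_def]
  have agent_mpc: "is_mpc_agent A H l (Vproc (?N + 2) (hard_mdp A l tree r j0))
      (agent (?N + 2) (hard_mdp A l tree r j0))" if "hard_instance A l H r j0" for tree r j0
    using mpc hard_instance.valid_mdp_D[OF that] by blast
  have agent_leaf: "Vproc (?N + 2) (hard_mdp A l tree r j0) (l + 1) s = w s"
    if "hard_instance A l H r j0" "s < ?N + 2" for tree r j0 s
    using semi_terminal_values hard_instance.valid_mdp_D[OF that(1)]
      hard_instance.semi_terminal_leaf_step[OF that] assms(1,3)
      reward_dist_hard_mdp_leaf_step[of l A tree r j0 s True 0 0]
    unfolding w_def by auto
  have "has_mpc_gap A H l agent \<kappa>"
  proof (cases "\<exists>j0<?N. w 0 + \<kappa> \<le> w (2 + j0)")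
    case True
    then obtain j0 where j0: "j0 < ?N" "w 0 + \<kappa> \<le> w (2 + j0)"
      by blast
    have inst: "hard_instance A l H r j0"
      by unfold_locales (use assms(1-3) j0(1) \<kappa> in \<open>auto simp: r_def\<close>)
    show ?thesis
      by (rule hard_instance.chain_has_mpc_gap[OF inst, where tree = False and agent = agent
            and V = "Vproc (?N + 2) (hard_mdp A l False r j0)"])
        (use \<kappa> agent_mpc[OF inst] agent_leaf[OF inst] j0 in \<open>auto simp: r_def\<close>)
  next
    case False
    have inst: "hard_instance A l H \<kappa> 0"
      by unfold_locales (use assms(1-3) \<kappa> in auto)
    show ?thesis
      by (rule hard_instance.tree_has_mpc_gap[OF inst, where tree = True and agent = agent
            and V = "Vproc (?N + 2) (hard_mdp A l True \<kappa> 0)"])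
        (use \<kappa> agent_mpc[OF inst] agent_leaf[OF inst] False in auto)
  qed
  then show ?thesis
    unfolding has_mpc_gap_def \<kappa>_def .
qed

end
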